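(* Let $n\ge3$ and let $\mathbf{u}\approx\mathbf{v}$ be an efficient rigid identity that is violated by $\mathbf{A}_n$ but satisfied by $\mathbf{A}_n\{\mathtt{B}_n\}$. Then the set $\{\mathbf{u}\approx\mathbf{v}\}$ is equivalent (i.e. each is derivable from the other, so they define the same variety) to some subset of the identities in $\mathtt{B}_n$, namely to a set of identities of the form $\mathbf{s}\approx\mathbf{t}$ with $\mathbf{s},\mathbf{t}\in\mathsf{B}_n$ (up to renaming the variable $t$).
   Context: All varieties are varieties of monoids (signature: associative binary operation and identity constant $1$). Words are elements of the free monoid $X^*$ over a countably infinite set $X$ of variables; identities are pairs of words, and variables may be substituted by $1$. For a variety $\mathbf{V}$ and set $\Sigma$ of identities, $\mathbf{V}\Sigma$ is the subvariety defined by $\Sigma$. $\mathbf{O}$ is the variety defined by $xyt_1xt_2y \approx yxt_1xt_2y$, $xt_1xyt_2y \approx xt_1yxt_2y$, $xt_1yt_2xy \approx xt_1yt_2yx$. For $n\ge3$, $\mathtt{A}_n$ is $x^n t_1\cdots t_n \approx t_1x\,t_2x\cdots t_nx$, $\mathtt{B}_n$ is the set of identities $x^{n-1}t \approx x^{n-2}tx \approx\cdots\approx xtx^{n-2}\approx tx^{n-1}$, $\mathsf{B}_n=\{x^{n-1-j}tx^{j}:0\le j\le n-1\}$, and $\mathbf{A}_n=\mathbf{O}\{\mathtt{A}_n\}$. A rigid identity is an identity $x^{e_0}t_1x^{e_1}\cdots t_rx^{e_r}\approx x^{f_0}t_1x^{f_1}\cdots t_rx^{f_r}$ with $r\ge0$,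 $e_i,f_i\ge0$ and $x,t_1,\dots,t_r$ distinct variables; it is efficient if $(e_i,f_i)\ne(0,0)$ for every $i=0,\dots,r$. *)

theory Defs
  imports Main
begin

(* Variables are natural numbers (a countably infinite set X); words are
   elements of the free monoid X^*, i.e. lists; an identity is a pair of words. *)
type_synonym word = "nat list"
type_synonym identity = "word \<times> word"

(* Substitution: a monoid endomorphism of X^*, given by images of variables
   (variables may be sent to the empty word 1). *)
definition subst :: "(nat \<Rightarrow> word) \<Rightarrow> word \<Rightarrow> word" where
  "subst \<sigma> w = concat (map \<sigma> w)"

(* By Birkhoff's completeness theorem, derives Sigma u v holds iff every monoid
   satisfying Sigma satisfies u ~ v, i.e. iff the variety defined by Sigma
   satisfies u ~ v. *)
inductive derives :: "identity set \<Rightarrow> word \<Rightarrow> word \<Rightarrow> bool" for \<Sigma> where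
  ax:    "(u, v) \<in> \<Sigma> \<Longrightarrow> derives \<Sigma> u v"
| refl:  "derives \<Sigma> u u"
| sym:   "derives \<Sigma> u v \<Longrightarrow> derives \<Sigma> v u"
| trans: "derives \<Sigma> u v \<Longrightarrow> derives \<Sigma> v w \<Longrightarrow> derives \<Sigma> u w"
| subst: "derives \<Sigma> u v \<Longrightarrow> derives \<Sigma> (subst \<sigma> u) (subst \<sigma> v)"
| mult:  "derives \<Sigma> u v \<Longrightarrow> derives \<Sigma> (p @ u @ q) (p @ v @ q)"

(* Defining identities of O, with x = 0, y = 1, t1 = 2, t2 = 3. *)
definition O_ids :: "identity set" where
  "O_ids = {([0,1,2,0,3,1], [1,0,2,0,3,1]),
            ([0,2,0,1,3,1], [0,2,1,0,3,1]),
            ([0,2,1,3,0,1], [0,2,1,3,1,0])}"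

(* The identity A_n : x^n t1 ... tn ~ t1 x t2 x ... tn x, with x = 0, ti = i. *)
definition A_identity :: "nat \<Rightarrow> identity" where
  "A_identity n = (replicate n 0 @ [1..<n+1], concat (map (\<lambda>i. [i, 0]) [1..<n+1]))"

definition An_ids :: "nat \<Rightarrow> identity set" where
  "An_ids n = O_ids \<union> {A_identity n}"

(* The set of words B_n = { x^(n-1-j) t x^j : 0 <= j <= n-1 }, with x = 0, t = 1. *)
definition B_words :: "nat \<Rightarrow> word set" where
  "B_words n = {replicate (n - 1 - j) 0 @ [1] @ replicate j 0 | j. j \<le> n - 1}"

definition B_ids :: "nat \<Rightarrow> identity set" where
  "B_ids n = {(s, t). s \<in> B_words n \<and> t \<in> B_words n}"

(* x^(e0) t1 x^(e1) ... tr x^(er), with ts = [t1,...,tr], es = [e0,...,er]. *)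
definition rigid_word :: "nat \<Rightarrow> nat list \<Rightarrow> nat list \<Rightarrow> word" where
  "rigid_word x ts es =
     replicate (es ! 0) x @ concat (map (\<lambda>i. (ts ! i) # replicate (es ! (i + 1)) x) [0..<length ts])"

definition efficient_rigid :: "word \<Rightarrow> word \<Rightarrow> bool" where
  "efficient_rigid u v \<longleftrightarrow>
     (\<exists>x ts es fs. distinct (x # ts) \<and>
        length es = length ts + 1 \<and> length fs = length ts + 1 \<and>
        (\<forall>i < length es. es ! i \<noteq> 0 \<or> fs ! i \<noteq> 0) \<and>
        u = rigid_word x ts es \<and> v = rigid_word x ts fs)"

end

theory Submission
  imports Defs
begin

text \<open>
  Every consequence \<open>u \<approx> v\<close> of \<open>A\<^sub>n \<union> B\<^sub>n\<close> has the following property under every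
  substitution: both sides have the same letter content, and if the left side is \<^emph>\<open>restricted\<close>
  (\<open>x\<close> occurs at most \<open>n - 1\<close> times, every other letter at most once), then either the two
  sides are equal, or both contain exactly \<open>n - 1\<close> copies of \<open>x\<close> in at most two blocks and agree
  once \<open>x\<close> is erased. For a rigid identity not derivable from \<open>A\<^sub>n\<close>, both sides contain
  fewer than \<open>n\<close> copies of \<open>x\<close> (otherwise \<open>A\<^sub>n\<close> collects all of them in front), so the left
  side is restricted and the invariant forces each side to consist of \<open>n - 1\<close> copies of \<open>x\<close>
  in at most two blocks; efficiency then leaves at most three letters \<open>t\<^sub>i\<close>. Deleting all
  \<open>t\<^sub>j\<close> but one turns \<open>u \<approx> v\<close> into identities of \<open>B\<^sub>n\<close>, and conversely these finitely
  many identities suffice to move the blocks of \<open>x\<close> from their places in \<open>u\<close> to those in \<open>v\<close>,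
  passing through words with a single block.
\<close>

lemma subst_Nil [simp]: "subst \<sigma> [] = []"
  by (simp add: subst_def)

lemma subst_Cons [simp]: "subst \<sigma> (a # w) = \<sigma> a @ subst \<sigma> w"
  by (simp add: subst_def)

lemma subst_append [simp]: "subst \<sigma> (v @ w) = subst \<sigma> v @ subst \<sigma> w"
  by (simp add: subst_def)

lemma subst_replicate [simp]: "subst \<sigma> (replicate k a) = concat (replicate k (\<sigma> a))"
  by (induct k) auto

lemma subst_concat: "subst \<sigma> (concat ws) = concat (map (subst \<sigma>) ws)"
  by (induct ws) auto

lemma subst_subst: "subst \<sigma> (subst \<tau> w) = subst (\<lambda>y. subst \<sigma> (\<tau> y)) w"
  by (induct w) auto

lemma subst_singleton: "subst (\<lambda>y. [y]) w = w"
  by (induct w) auto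

lemma count_list_concat: "count_list (concat ws) y = sum_list (map (\<lambda>w. count_list w y) ws)"
  by (induct ws) auto

lemma count_list_replicate: "count_list (replicate k a) y = (if a = y then k else 0)"
  by (induct k) auto

lemma count_list_concat_replicate: "count_list (concat (replicate k w)) y = k * count_list w y"
  by (induct k) auto

lemma count_list_distinct: "distinct xs \<Longrightarrow> count_list xs y \<le> 1"
  by (induct xs) (auto simp: count_list_0_iff)

section \<open>An invariant of \<open>A\<^sub>n \<union> B\<^sub>n\<close>\<close>

definition restricted :: "nat \<Rightarrow> nat \<Rightarrow> word \<Rightarrow> bool" where
  "restricted x n w \<longleftrightarrow> count_list w x \<le> n - 1 \<and> (\<forall>y. y \<noteq> x \<longrightarrow> count_list w y \<le> 1)"

definition two_blocks :: "nat \<Rightarrow> word \<Rightarrow> bool" where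
  "two_blocks x w \<longleftrightarrow> (\<exists>P W Q i j. w = P @ replicate i x @ W @ replicate j x @ Q \<and>
      x \<notin> set P \<and> x \<notin> set W \<and> x \<notin> set Q)"

text \<open>On restricted words, \<open>B\<^sub>n\<close> can only move \<open>n - 1\<close> copies of \<open>x\<close> that
  form at most two blocks; the left summand records the word with these copies erased.\<close>
definition B_normal :: "nat \<Rightarrow> nat \<Rightarrow> word \<Rightarrow> word + word" where
  "B_normal x n w =
     (if count_list w x = n - 1 \<and> two_blocks x w then Inl (filter (\<lambda>y. y \<noteq> x) w) else Inr w)"

definition B_invariant :: "nat \<Rightarrow> nat \<Rightarrow> word \<Rightarrow> word \<Rightarrow> bool" where
  "B_invariant x n u v \<longleftrightarrow>
     (\<forall>\<sigma> y. count_list (subst \<sigma> u) y = count_list (subst \<sigma> v) y) \<and>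
     (\<forall>\<sigma>. restricted x n (subst \<sigma> u) \<longrightarrow> B_normal x n (subst \<sigma> u) = B_normal x n (subst \<sigma> v))"

lemma restricted_cong: "(\<And>y. count_list a y = count_list b y) \<Longrightarrow> restricted x n a = restricted x n b"
  by (simp add: restricted_def)

lemma restricted_infix: "restricted x n (p @ w @ q) \<Longrightarrow> restricted x n w"
  by (auto simp: restricted_def)

lemma two_blocks_extend:
  assumes "two_blocks x w" "x \<notin> set p" "x \<notin> set q"
  shows "two_blocks x (p @ w @ q)"
proof -
  obtain P W Q i j where "w = P @ replicate i x @ W @ replicate j x @ Q"
    "x \<notin> set P" "x \<notin> set W" "x \<notin> set Q"
    using assms(1) unfolding two_blocks_def by blast
  then show ?thesis unfolding two_blocks_def using assms(2,3)
    by (intro exI[of _ "p @ P"] exI[of _ W] exI[of _ "Q @ q"] exI[of _ i] exI[of _ j]) auto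
qed

lemma B_normal_cong:
  assumes "restricted x n (p @ a @ q)" and "B_normal x n a = B_normal x n b"
  shows "B_normal x n (p @ a @ q) = B_normal x n (p @ b @ q)"
proof (cases "count_list a x = n - 1 \<and> two_blocks x a")
  case True
  then have b: "count_list b x = n - 1 \<and> two_blocks x b"
    and "filter (\<lambda>y. y \<noteq> x) a = filter (\<lambda>y. y \<noteq> x) b"
    using assms(2) by (auto simp: B_normal_def split: if_splits)
  moreover have "x \<notin> set p" "x \<notin> set q"
    using assms(1) True by (auto simp: restricted_def count_list_0_iff[symmetric])
  ultimately show ?thesis using True two_blocks_extend by (simp add: B_normal_def)
next
  case False
  then show ?thesis using assms(2) by (auto simp: B_normal_def split: if_splits)
qed

lemma derives_B_invariant:
  assumes "derives \<Sigma> u v" and "\<And>l r. (l, r) \<in> \<Sigma> \<Longrightarrow> B_invariant x n l r"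
  shows "B_invariant x n u v"
  using assms(1)
proof induct
  case (ax u v)
  then show ?case using assms(2) by blast
next
  case (refl u)
  then show ?case by (simp add: B_invariant_def)
next
  case (sym u v)
  then show ?case by (simp add: B_invariant_def) (metis restricted_cong)
next
  case (trans u v w)
  then show ?case by (simp add: B_invariant_def) (metis restricted_cong)
next
  case (subst u v \<tau>)
  then show ?case by (simp add: B_invariant_def subst_subst)
next
  case (mult u v p q)
  then show ?case
    unfolding B_invariant_def by (auto dest: restricted_infix intro: B_normal_cong)
qed

lemma restricted_square_letters:
  assumes "restricted x n w" and "\<And>y. 2 * count_list a y \<le> count_list w y"
  shows "a = replicate (length a) x"
proof (rule replicate_length_same[symmetric], rule ballI, rule ccontr)
  fix y assume "y \<in> set a" "y \<noteq> x"
  then have "count_list a y \<ge> 1" "count_list w y \<le> 1"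
    using assms(1) count_list_0_iff[of a y] by (auto simp: restricted_def)
  then show False using assms(2)[of y] by linarith
qed

text \<open>Both sides of each identity of \<open>O\<close> contain the letters 0 and 1 twice, so in a restricted
  instance they are sent to powers of \<open>x\<close>, which commute.\<close>
lemma O_ids_B_invariant:
  assumes "(l, r) \<in> O_ids"
  shows "B_invariant x n l r"
  unfolding B_invariant_def
proof (intro conjI allI impI)
  fix \<sigma> y
  show "count_list (subst \<sigma> l) y = count_list (subst \<sigma> r) y"
    using assms by (auto simp: O_ids_def)
next
  fix \<sigma> assume restr: "restricted x n (subst \<sigma> l)"
  have "\<sigma> 0 = replicate (length (\<sigma> 0)) x" "\<sigma> 1 = replicate (length (\<sigma> 1)) x"
    by (rule restricted_square_letters[OF restr], use assms in \<open>auto simp: O_ids_def\<close>)+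
  then have "\<sigma> 0 @ \<sigma> 1 @ w = \<sigma> 1 @ \<sigma> 0 @ w" for w
    by (metis append.assoc add.commute replicate_add)
  then have "subst \<sigma> l = subst \<sigma> r"
    using assms by (auto simp: O_ids_def)
  then show "B_normal x n (subst \<sigma> l) = B_normal x n (subst \<sigma> r)" by simp
qed

text \<open>In a restricted instance of \<open>A\<^sub>n\<close> the letter 0, occurring \<open>n\<close> times, must be erased, and then
  both sides coincide.\<close>
lemma A_identity_B_invariant:
  assumes "n \<ge> 2" and "(l, r) = A_identity n"
  shows "B_invariant x n l r"
  unfolding B_invariant_def
proof (intro conjI allI impI)
  let ?ts = "[1..<n+1]"
  fix \<sigma>
  have l: "subst \<sigma> l = concat (replicate n (\<sigma> 0)) @ concat (map \<sigma> ?ts)"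
    using assms(2) by (simp add: A_identity_def subst_def del: upt_Suc)
  have r: "subst \<sigma> r = concat (map (\<lambda>i. \<sigma> i @ \<sigma> 0) ?ts)"
    using assms(2) by (simp add: A_identity_def subst_concat comp_def del: upt_Suc)
  have count_l: "count_list (subst \<sigma> l) y =
      n * count_list (\<sigma> 0) y + sum_list (map (\<lambda>i. count_list (\<sigma> i) y) ?ts)" for y
    unfolding l by (simp add: count_list_concat comp_def sum_list_replicate)
  then show "count_list (subst \<sigma> l) y = count_list (subst \<sigma> r) y" for y
    unfolding r count_list_concat by (simp add: comp_def sum_list_addf sum_list_triv)
  assume restr: "restricted x n (subst \<sigma> l)"
  have "\<sigma> 0 = []"
  proof (rule ccontr)
    assume "\<sigma> 0 \<noteq> []"
    then obtain y where "count_list (\<sigma> 0) y \<ge> 1"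
      by (metis count_list_0_iff last_in_set less_one not_le)
    then have "count_list (subst \<sigma> l) y \<ge> n"
      unfolding count_l by (metis le_add1 mult.right_neutral mult_le_mono2 order_trans)
    then show False using restr assms(1) unfolding restricted_def by (cases "y = x") fastforce+
  qed
  then show "B_normal x n (subst \<sigma> l) = B_normal x n (subst \<sigma> r)"
    unfolding l r by simp
qed

definition B_word :: "nat \<Rightarrow> nat \<Rightarrow> word" where
  "B_word n g = replicate g 0 @ [1] @ replicate (n - 1 - g) 0"

lemma B_words_eq: "B_words n = B_word n ` {..n - 1}"
proof (intro set_eqI iffI)
  fix w assume "w \<in> B_words n"
  then obtain j where "j \<le> n - 1" "w = B_word n (n - 1 - j)"
    by (auto simp: B_words_def B_word_def)
  then show "w \<in> B_word n ` {..n - 1}" by auto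
next
  fix w assume "w \<in> B_word n ` {..n - 1}"
  then obtain g where "g \<le> n - 1"
    "w = replicate (n - 1 - (n - 1 - g)) 0 @ [1] @ replicate (n - 1 - g) 0"
    by (auto simp: B_word_def)
  then show "w \<in> B_words n" unfolding B_words_def by auto
qed

lemma count_list_subst_B_word:
  assumes "g \<le> n - 1"
  shows "count_list (subst \<sigma> (B_word n g)) y = (n - 1) * count_list (\<sigma> 0) y + count_list (\<sigma> 1) y"
proof -
  have "g * c + (n - 1 - g) * c = (n - 1) * c" for c :: nat
    using assms by (metis add_mult_distrib le_add_diff_inverse)
  then show ?thesis by (simp add: B_word_def count_list_concat_replicate)
qed

lemma B_normal_subst_B_word:
  assumes n: "n \<ge> 3" and g: "g \<le> n - 1" and restr: "restricted x n (subst \<sigma> (B_word n g))"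
  shows "B_normal x n (subst \<sigma> (B_word n g)) = (if \<sigma> 0 = [] then B_normal x n (\<sigma> 1) else Inl (\<sigma> 1))"
proof -
  define m where "m = length (\<sigma> 0)"
  have m: "\<sigma> 0 = replicate m x"
    unfolding m_def
  proof (rule restricted_square_letters[OF restr])
    fix y
    have "2 * count_list (\<sigma> 0) y \<le> (n - 1) * count_list (\<sigma> 0) y"
      using n by (intro mult_le_mono1) simp
    then show "2 * count_list (\<sigma> 0) y \<le> count_list (subst \<sigma> (B_word n g)) y"
      unfolding count_list_subst_B_word[OF g] by linarith
  qed
  have count_x: "(n - 1) * m + count_list (\<sigma> 1) x \<le> n - 1"
    using restr count_list_subst_B_word[OF g, of \<sigma> x] m
    by (simp add: restricted_def count_list_replicate)
  have "m \<le> 1"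
  proof (rule ccontr)
    assume "\<not> m \<le> 1"
    then have "(n - 1) * 2 \<le> (n - 1) * m" by (intro mult_le_mono2) simp
    then show False using count_x n by linarith
  qed
  then consider "m = 0" | "m = 1" by linarith
  then consider "\<sigma> 0 = []" | "\<sigma> 0 = [x]" "x \<notin> set (\<sigma> 1)"
    using m count_x by cases (auto simp: count_list_0_iff)
  then show ?thesis
  proof cases
    case 2
    then have w: "subst \<sigma> (B_word n g) = replicate g x @ \<sigma> 1 @ replicate (n - 1 - g) x"
      by (simp add: B_word_def)
    have "two_blocks x (subst \<sigma> (B_word n g))"
      unfolding w two_blocks_def using 2
      by (intro exI[of _ "[]"] exI[of _ "\<sigma> 1"] exI[of _ "[]"] exI[of _ g] exI[of _ "n - 1 - g"])
        simp
    moreover have "filter (\<lambda>y. y \<noteq> x) (subst \<sigma> (B_word n g)) = \<sigma> 1"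
      unfolding w using 2 by (auto simp: filter_id_conv)
    ultimately show ?thesis
      using 2 g by (simp add: B_normal_def w count_list_replicate)
  qed (simp add: B_word_def)
qed

lemma B_ids_B_invariant:
  assumes n: "n \<ge> 3" and "(l, r) \<in> B_ids n"
  shows "B_invariant x n l r"
proof -
  obtain g h where g: "g \<le> n - 1" "l = B_word n g" and h: "h \<le> n - 1" "r = B_word n h"
    using assms(2) by (auto simp: B_ids_def B_words_eq)
  have counts: "count_list (subst \<sigma> l) y = count_list (subst \<sigma> r) y" for \<sigma> y
    unfolding g(2) h(2) count_list_subst_B_word[OF g(1)] count_list_subst_B_word[OF h(1)] ..
  show ?thesis
    unfolding B_invariant_def
  proof (intro conjI allI impI counts)
    fix \<sigma> assume "restricted x n (subst \<sigma> l)"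
    moreover then have "restricted x n (subst \<sigma> r)"
      using restricted_cong counts by blast
    ultimately show "B_normal x n (subst \<sigma> l) = B_normal x n (subst \<sigma> r)"
      using B_normal_subst_B_word[OF n g(1)] B_normal_subst_B_word[OF n h(1)] g(2) h(2) by simp
  qed
qed

lemma An_B_ids_B_invariant:
  assumes "n \<ge> 3" and "(l, r) \<in> An_ids n \<union> B_ids n"
  shows "B_invariant x n l r"
  using assms O_ids_B_invariant A_identity_B_invariant[of n] B_ids_B_invariant
  by (auto simp: An_ids_def)

section \<open>Consequences of \<open>A\<^sub>n\<close>\<close>

lemma derives_A_instance:
  assumes "A_identity n \<in> \<Sigma>"
  shows "derives \<Sigma> (replicate n x @ concat (map W [1..<n+1]))
                     (concat (map (\<lambda>i. W i @ [x]) [1..<n+1]))"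
proof -
  define \<sigma> where "\<sigma> = (\<lambda>i. if i = 0 then [x] else W i)"
  have \<sigma>0: "\<sigma> 0 = [x]" by (simp add: \<sigma>_def)
  have "derives \<Sigma> (subst \<sigma> (fst (A_identity n))) (subst \<sigma> (snd (A_identity n)))"
    using assms by (intro derives.subst derives.ax) simp
  moreover have "map \<sigma> [1..<n+1] = map W [1..<n+1]"
    by (rule map_cong) (auto simp: \<sigma>_def simp del: upt_Suc)
  then have "subst \<sigma> (fst (A_identity n)) = replicate n x @ concat (map W [1..<n+1])"
    by (simp add: A_identity_def subst_def map_replicate_const \<sigma>0 del: upt_Suc map_eq_conv)
  moreover have "map (\<lambda>i. \<sigma> i @ \<sigma> 0) [1..<n+1] = map (\<lambda>i. W i @ [x]) [1..<n+1]"
    by (rule map_cong) (auto simp: \<sigma>_def simp del: upt_Suc)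
  then have "subst \<sigma> (snd (A_identity n)) = concat (map (\<lambda>i. W i @ [x]) [1..<n+1])"
    by (simp add: A_identity_def subst_concat comp_def \<sigma>0 del: upt_Suc map_eq_conv)
  ultimately show ?thesis by simp
qed

lemma derives_A_rotate:
  assumes "A_identity n \<in> \<Sigma>" "1 \<le> n" "n \<le> k"
  shows "derives \<Sigma> (replicate k x @ V) (replicate (k - 1) x @ V @ [x])"
proof -
  define W where "W = (\<lambda>i. if i = n then V else ([] :: word))"
  have upt: "[1..<n+1] = [1..<n] @ [n]" using assms(2) by simp
  have "map W [1..<n] = map (\<lambda>_. []) [1..<n]"
    and "map (\<lambda>i. W i @ [x]) [1..<n] = map (\<lambda>_. [x]) [1..<n]"
    by (rule map_cong; simp add: W_def)+
  then have "derives \<Sigma> (replicate n x @ V) (replicate (n - 1) x @ V @ [x])"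
    using derives_A_instance[OF assms(1), of x W]
    unfolding upt by (simp add: W_def map_replicate_const del: upt_Suc)
  then have "derives \<Sigma> (replicate (k - n) x @ (replicate n x @ V) @ [])
      (replicate (k - n) x @ (replicate (n - 1) x @ V @ [x]) @ [])"
    by (rule derives.mult)
  moreover have "replicate k x = replicate (k - n) x @ replicate n x"
    and "replicate (k - 1) x = replicate (k - n) x @ replicate (n - 1) x"
    using assms(2,3) by (simp_all flip: replicate_add)
  ultimately show ?thesis by simp
qed

lemma derives_A_collect_front:
  assumes "A_identity n \<in> \<Sigma>" "1 \<le> n" "n \<le> k"
  shows "derives \<Sigma> (replicate k x @ V) (replicate (k + count_list V x) x @ filter (\<lambda>y. y \<noteq> x) V)"
  using assms(3)
proof (induction V arbitrary: k rule: rev_induct)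
  case Nil
  show ?case by (simp add: derives.refl)
next
  case (snoc y V)
  show ?case
  proof (cases "y = x")
    case True
    have "derives \<Sigma> (replicate k x @ V @ [x]) (replicate (Suc k) x @ V)"
      using derives_A_rotate[OF assms(1,2), of "Suc k" x V] snoc.prems by (simp add: derives.sym)
    then show ?thesis
      using True snoc.IH[of "Suc k"] snoc.prems by (auto intro: derives.trans)
  next
    case False
    have "derives \<Sigma> ([] @ (replicate k x @ V) @ [y])
        ([] @ (replicate (k + count_list V x) x @ filter (\<lambda>y. y \<noteq> x) V) @ [y])"
      using snoc.IH[OF snoc.prems] by (rule derives.mult)
    then show ?thesis using False by simp
  qed
qed

lemma split_at_occurrences:
  assumes "k \<le> count_list w x"
  obtains W rest where "w = concat (map (\<lambda>i. W i @ [x]) [1..<k+1]) @ rest" "\<forall>i. x \<notin> set (W i)"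
  using assms
proof (induction k arbitrary: thesis)
  case 0
  show ?case by (rule 0(1)[of "\<lambda>_. []" w]) auto
next
  case (Suc k)
  obtain W rest where w: "w = concat (map (\<lambda>i. W i @ [x]) [1..<k+1]) @ rest"
    and W: "\<forall>i. x \<notin> set (W i)"
    using Suc.IH Suc.prems(2) by (metis Suc_leD)
  have "count_list (concat (map (\<lambda>i. W i @ [x]) [1..<k+1])) x = k"
    using W by (simp add: count_list_concat comp_def sum_list_triv del: upt_Suc)
  then have "count_list rest x \<noteq> 0"
    using Suc.prems(2) unfolding w by (simp del: upt_Suc)
  then have "x \<in> set rest"
    by (simp add: count_list_0_iff)
  then obtain W' rest' where rest: "rest = W' @ x # rest'" and W': "x \<notin> set W'"
    by (metis split_list_first)
  let ?W = "W(Suc k := W')"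
  have "map (\<lambda>i. ?W i @ [x]) [1..<k+1] = map (\<lambda>i. W i @ [x]) [1..<k+1]"
    by (rule map_cong) auto
  moreover have "[1..<Suc k + 1] = [1..<k+1] @ [Suc k]" by simp
  ultimately have "w = concat (map (\<lambda>i. ?W i @ [x]) [1..<Suc k+1]) @ rest'"
    unfolding w rest by (simp del: upt_Suc map_eq_conv)
  then show ?case by (rule Suc.prems(1)) (use W W' in auto)
qed

lemma derives_A_collect:
  assumes "A_identity n \<in> \<Sigma>" "1 \<le> n" "n \<le> count_list w x"
  shows "derives \<Sigma> w (replicate (count_list w x) x @ filter (\<lambda>y. y \<noteq> x) w)"
proof -
  obtain W rest where w: "w = concat (map (\<lambda>i. W i @ [x]) [1..<n+1]) @ rest"
    and W: "\<forall>i. x \<notin> set (W i)"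
    using split_at_occurrences[OF assms(3)] .
  let ?V = "concat (map W [1..<n+1]) @ rest"
  have "derives \<Sigma> ([] @ concat (map (\<lambda>i. W i @ [x]) [1..<n+1]) @ rest)
      ([] @ (replicate n x @ concat (map W [1..<n+1])) @ rest)"
    using derives_A_instance[OF assms(1), of x W] by (rule derives.mult[OF derives.sym])
  then have "derives \<Sigma> w (replicate n x @ ?V)" unfolding w by simp
  moreover have "derives \<Sigma> (replicate n x @ ?V)
      (replicate (n + count_list ?V x) x @ filter (\<lambda>y. y \<noteq> x) ?V)"
    using derives_A_collect_front[OF assms(1,2) order_refl] .
  moreover have "count_list w x = n + count_list ?V x"
    using W by (simp add: w count_list_concat comp_def sum_list_triv del: upt_Suc)
  moreover have "filter (\<lambda>y. y \<noteq> x) w = filter (\<lambda>y. y \<noteq> x) ?V"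
    using W by (simp add: w filter_concat comp_def filter_id_conv del: upt_Suc)
  ultimately show ?thesis by (metis derives.trans)
qed

lemma derives_A_of_same_x_projection:
  assumes "A_identity n \<in> \<Sigma>" "1 \<le> n" "n \<le> count_list w x"
    and "count_list w' x = count_list w x" "filter (\<lambda>y. y \<noteq> x) w' = filter (\<lambda>y. y \<noteq> x) w"
  shows "derives \<Sigma> w w'"
  using derives_A_collect[OF assms(1-3)] derives_A_collect[OF assms(1,2), of w' x] assms(3-5)
  by (metis derives.sym derives.trans)

section \<open>Rigid words\<close>

fun rigid :: "nat \<Rightarrow> nat list \<Rightarrow> nat list \<Rightarrow> word" where
  "rigid x [] es = replicate (hd es) x"
| "rigid x (t # ts) es = replicate (hd es) x @ t # rigid x ts (tl es)"

lemma rigid_word_eq_rigid: "length es = length ts + 1 \<Longrightarrow> rigid_word x ts es = rigid x ts es"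
proof (induction ts arbitrary: es)
  case Nil
  then show ?case by (cases es) (auto simp: rigid_word_def)
next
  case (Cons t ts)
  then obtain e es' where es: "es = e # es'" "length es' = length ts + 1"
    by (cases es) auto
  have "[0..<Suc (length ts)] = 0 # map Suc [0..<length ts]"
    by (metis map_Suc_upt upt_conv_Cons zero_less_Suc)
  then have "rigid_word x (t # ts) es = replicate e x @ t # rigid_word x ts es'"
    by (simp add: rigid_word_def es comp_def del: upt_Suc)
  then show ?case using Cons.IH[OF es(2)] es by simp
qed

lemma count_list_rigid_x:
  "x \<notin> set ts \<Longrightarrow> length es = length ts + 1 \<Longrightarrow> count_list (rigid x ts es) x = sum_list es"
  by (induction ts arbitrary: es) (auto simp: count_list_replicate neq_Nil_conv length_Suc_conv)

lemma filter_rigid: "x \<notin> set ts \<Longrightarrow> filter (\<lambda>y. y \<noteq> x) (rigid x ts es) = ts"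
  by (induction ts arbitrary: es) auto

lemma count_list_rigid_neq: "y \<noteq> x \<Longrightarrow> count_list (rigid x ts es) y = count_list ts y"
  by (induction ts arbitrary: es) (auto simp: count_list_replicate)

text \<open>The exponents \<open>[e\<^sub>0, \<dots>, e\<^sub>r]\<close> of
  \<open>w = x\<^bsup>e\<^sub>0\<^esup> t\<^sub>1 x\<^bsup>e\<^sub>1\<^esup> \<cdots> t\<^sub>r x\<^bsup>e\<^sub>r\<^esup>\<close> with all \<open>t\<^sub>i \<noteq> x\<close>.\<close>
fun x_exponents :: "nat \<Rightarrow> word \<Rightarrow> nat list" where
  "x_exponents x [] = [0]"
| "x_exponents x (y # w) =
     (if y = x then (hd (x_exponents x w) + 1) # tl (x_exponents x w) else 0 # x_exponents x w)"

lemma x_exponents_ne_Nil: "x_exponents x w \<noteq> []"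
  by (induction w) auto

lemma x_exponents_replicate_append:
  "x_exponents x (replicate k x @ w) = (hd (x_exponents x w) + k) # tl (x_exponents x w)"
  by (induction k) (auto simp: x_exponents_ne_Nil)

lemma x_exponents_append_free:
  "x \<notin> set P \<Longrightarrow> x_exponents x (P @ w) = replicate (length P) 0 @ x_exponents x w"
  by (induction P) auto

lemma x_exponents_rigid:
  "x \<notin> set ts \<Longrightarrow> length es = length ts + 1 \<Longrightarrow> x_exponents x (rigid x ts es) = es"
proof (induction ts arbitrary: es)
  case Nil
  then show ?case using x_exponents_replicate_append[of x "hd es" "[]"] by (cases es) auto
next
  case (Cons t ts)
  then show ?case by (cases es) (auto simp: x_exponents_replicate_append)
qed

definition nonzero_count :: "nat list \<Rightarrow> nat" where
  "nonzero_count es = length (filter (\<lambda>e. e \<noteq> 0) es)"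

lemma nonzero_count_x_exponents_replicate_append:
  "nonzero_count (x_exponents x (replicate k x @ w)) \<le> Suc (nonzero_count (x_exponents x w))"
  using x_exponents_ne_Nil[of x w]
  by (cases "x_exponents x w") (auto simp: x_exponents_replicate_append nonzero_count_def)

lemma nonzero_count_x_exponents_append_free:
  "x \<notin> set P \<Longrightarrow> nonzero_count (x_exponents x (P @ w)) = nonzero_count (x_exponents x w)"
  by (simp add: x_exponents_append_free nonzero_count_def)

lemma nonzero_count_x_exponents_two_blocks:
  assumes "two_blocks x w"
  shows "nonzero_count (x_exponents x w) \<le> 2"
proof -
  obtain P W Q i j where w: "w = P @ replicate i x @ W @ replicate j x @ Q"
    and free: "x \<notin> set P" "x \<notin> set W" "x \<notin> set Q"
    using assms unfolding two_blocks_def by blast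
  have "nonzero_count (x_exponents x Q) = 0"
    using nonzero_count_x_exponents_append_free[OF free(3), of "[]"]
    by (simp add: nonzero_count_def)
  then show ?thesis
    using nonzero_count_x_exponents_replicate_append[of x i "W @ replicate j x @ Q"]
      nonzero_count_x_exponents_replicate_append[of x j Q]
    by (simp add: w nonzero_count_x_exponents_append_free free)
qed

definition prefix_sum :: "nat list \<Rightarrow> nat \<Rightarrow> nat" where
  "prefix_sum es m = sum_list (take (Suc m) es)"

lemma prefix_sum_le: "prefix_sum es m \<le> sum_list es"
  unfolding prefix_sum_def by (metis append_take_drop_id le_add1 sum_list_append)

lemma subst_rigid_erase:
  "\<forall>t\<in>set ts. \<sigma> t = [] \<Longrightarrow> \<sigma> x = [z] \<Longrightarrow> length es = length ts + 1 \<Longrightarrow>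
     subst \<sigma> (rigid x ts es) = replicate (sum_list es) z"
  by (induction ts arbitrary: es) (auto simp: replicate_add neq_Nil_conv length_Suc_conv)

lemma subst_rigid_single_letter:
  assumes "distinct (x # ts)" "m < length ts" "length es = length ts + 1"
  shows "subst (\<lambda>y. if y = x then [0] else if y = ts ! m then [1] else []) (rigid x ts es) =
     replicate (prefix_sum es m) 0 @ [1] @ replicate (sum_list es - prefix_sum es m) 0"
  using assms
proof (induction ts arbitrary: es m)
  case Nil
  then show ?case by simp
next
  case (Cons t ts)
  then obtain e es' where es: "es = e # es'" "length es' = length ts + 1"
    by (cases es) auto
  show ?case
  proof (cases m)
    case 0
    have "subst (\<lambda>y. if y = x then [0] else if y = t then [1] else []) (rigid x ts es') =
        replicate (sum_list es') 0"
      using Cons.prems es by (intro subst_rigid_erase) auto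
    then show ?thesis
      using Cons.prems es unfolding 0 by (simp add: prefix_sum_def cong: if_cong)
  next
    case (Suc m')
    then have "t \<noteq> ts ! m'"
      using Cons.prems by (metis distinct.simps(2) nth_mem length_Cons Suc_less_SucD)
    then show ?thesis
      using Cons.IH[of m' es'] Cons.prems es prefix_sum_le[of es' m'] unfolding Suc
      by (simp add: prefix_sum_def replicate_add[symmetric] cong: if_cong)
  qed
qed

section \<open>Moving blocks of \<open>x\<close> with \<open>B\<^sub>n\<close>\<close>

declare derives.trans [trans]

abbreviation B_equiv :: "identity set \<Rightarrow> nat \<Rightarrow> nat \<Rightarrow> nat \<Rightarrow> bool" where
  "B_equiv \<Sigma> n g h \<equiv> derives \<Sigma> (B_word n g) (B_word n h)"

lemma derives_move_x_blocks:
  assumes "B_equiv \<Sigma> n g h"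
    and "u = P @ replicate g x @ W @ replicate (n - 1 - g) x @ Q"
    and "v = P @ replicate h x @ W @ replicate (n - 1 - h) x @ Q"
  shows "derives \<Sigma> u v"
proof -
  define \<sigma> where "\<sigma> = (\<lambda>y::nat. if y = 0 then [x] else if y = 1 then W else [])"
  have "subst \<sigma> (B_word n k) = replicate k x @ W @ replicate (n - 1 - k) x" for k
    by (simp add: B_word_def \<sigma>_def)
  then show ?thesis
    using derives.mult[OF derives.subst[OF assms(1), of \<sigma>], of P Q] assms(2,3) by simp
qed

text \<open>In \<open>derives_rigid_blocks_ij_kl\<close> the nonzero exponents of \<open>x\<close> sit at positions \<open>i, j\<close> on the
  left and \<open>k, l\<close> on the right; all \<open>n - 1\<close> copies are moved together via single-block words.\<close>

lemma derives_rigid_blocks_01_01: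
  assumes "B_equiv \<Sigma> n e0 f0" "e0 + e1 = n - 1" "f0 + f1 = n - 1"
  shows "derives \<Sigma> (rigid x [t1] [e0, e1]) (rigid x [t1] [f0, f1])"
proof -
  have "n - Suc e0 = e1" "n - Suc f0 = f1" using assms(2,3) by arith+
  then show ?thesis by (intro derives_move_x_blocks[OF assms(1), of _ "[]" x "[t1]" "[]"]) simp_all
qed

lemma derives_rigid_blocks_01_12:
  assumes "B_equiv \<Sigma> n e0 0" "B_equiv \<Sigma> n (n - 1) f1" "e0 + e1 = n - 1" "f1 + f2 = n - 1"
  shows "derives \<Sigma> (rigid x [t1, t2] [e0, e1, 0]) (rigid x [t1, t2] [0, f1, f2])"
proof -
  have ar: "n - Suc e0 = e1" "n - Suc f1 = f2" using assms(3,4) by arith+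
  have "derives \<Sigma> (rigid x [t1, t2] [e0, e1, 0]) (rigid x [t1, t2] [0, n - 1, 0])"
    by (rule derives_move_x_blocks[OF assms(1), of _ "[]" x "[t1]" "[t2]"]) (simp_all add: ar)
  also have "derives \<Sigma> \<dots> (rigid x [t1, t2] [0, f1, f2])"
    by (rule derives_move_x_blocks[OF assms(2), of _ "[t1]" x "[t2]" "[]"]) (simp_all add: ar)
  finally show ?thesis .
qed

lemma derives_rigid_blocks_01_02:
  assumes "B_equiv \<Sigma> n e0 (n - 1)" "B_equiv \<Sigma> n (n - 1) f0" "e0 + e1 = n - 1" "f0 + f2 = n - 1"
  shows "derives \<Sigma> (rigid x [t1, t2] [e0, e1, 0]) (rigid x [t1, t2] [f0, 0, f2])"
proof -
  have ar: "n - Suc e0 = e1" "n - Suc f0 = f2" using assms(3,4) by arith+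
  have "derives \<Sigma> (rigid x [t1, t2] [e0, e1, 0]) (rigid x [t1, t2] [n - 1, 0, 0])"
    by (rule derives_move_x_blocks[OF assms(1), of _ "[]" x "[t1]" "[t2]"]) (simp_all add: ar)
  also have "derives \<Sigma> \<dots> (rigid x [t1, t2] [f0, 0, f2])"
    by (rule derives_move_x_blocks[OF assms(2), of _ "[]" x "[t1, t2]" "[]"]) (simp_all add: ar)
  finally show ?thesis .
qed

lemma derives_rigid_blocks_02_12:
  assumes "B_equiv \<Sigma> n e0 0" "B_equiv \<Sigma> n 0 f1" "e0 + e2 = n - 1" "f1 + f2 = n - 1"
  shows "derives \<Sigma> (rigid x [t1, t2] [e0, 0, e2]) (rigid x [t1, t2] [0, f1, f2])"
proof -
  have ar: "n - Suc e0 = e2" "n - Suc f1 = f2" using assms(3,4) by arith+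
  have "derives \<Sigma> (rigid x [t1, t2] [e0, 0, e2]) (rigid x [t1, t2] [0, 0, n - 1])"
    by (rule derives_move_x_blocks[OF assms(1), of _ "[]" x "[t1, t2]" "[]"]) (simp_all add: ar)
  also have "derives \<Sigma> \<dots> (rigid x [t1, t2] [0, f1, f2])"
    by (rule derives_move_x_blocks[OF assms(2), of _ "[t1]" x "[t2]" "[]"]) (simp_all add: ar)
  finally show ?thesis .
qed

lemma derives_rigid_blocks_01_23:
  assumes "B_equiv \<Sigma> n e0 0" "B_equiv \<Sigma> n (n - 1) 0" "B_equiv \<Sigma> n 0 f2"
    "e0 + e1 = n - 1" "f2 + f3 = n - 1"
  shows "derives \<Sigma> (rigid x [t1, t2, t3] [e0, e1, 0, 0]) (rigid x [t1, t2, t3] [0, 0, f2, f3])"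
proof -
  have ar: "n - Suc e0 = e1" "n - Suc f2 = f3" using assms(4,5) by arith+
  have "derives \<Sigma> (rigid x [t1, t2, t3] [e0, e1, 0, 0]) (rigid x [t1, t2, t3] [0, n - 1, 0, 0])"
    by (rule derives_move_x_blocks[OF assms(1), of _ "[]" x "[t1]" "[t2, t3]"]) (simp_all add: ar)
  also have "derives \<Sigma> \<dots> (rigid x [t1, t2, t3] [0, 0, 0, n - 1])"
    by (rule derives_move_x_blocks[OF assms(2), of _ "[t1]" x "[t2, t3]" "[]"]) (simp_all add: ar)
  also have "derives \<Sigma> \<dots> (rigid x [t1, t2, t3] [0, 0, f2, f3])"
    by (rule derives_move_x_blocks[OF assms(3), of _ "[t1, t2]" x "[t3]" "[]"]) (simp_all add: ar)
  finally show ?thesis .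
qed

lemma derives_rigid_blocks_02_13:
  assumes "B_equiv \<Sigma> n e0 0" "B_equiv \<Sigma> n 0 (n - 1)" "B_equiv \<Sigma> n (n - 1) f1"
    "e0 + e2 = n - 1" "f1 + f3 = n - 1"
  shows "derives \<Sigma> (rigid x [t1, t2, t3] [e0, 0, e2, 0]) (rigid x [t1, t2, t3] [0, f1, 0, f3])"
proof -
  have ar: "n - Suc e0 = e2" "n - Suc f1 = f3" using assms(4,5) by arith+
  have "derives \<Sigma> (rigid x [t1, t2, t3] [e0, 0, e2, 0]) (rigid x [t1, t2, t3] [0, 0, n - 1, 0])"
    by (rule derives_move_x_blocks[OF assms(1), of _ "[]" x "[t1, t2]" "[t3]"]) (simp_all add: ar)
  also have "derives \<Sigma> \<dots> (rigid x [t1, t2, t3] [0, n - 1, 0, 0])"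
    by (rule derives_move_x_blocks[OF assms(2), of _ "[t1]" x "[t2]" "[t3]"]) (simp_all add: ar)
  also have "derives \<Sigma> \<dots> (rigid x [t1, t2, t3] [0, f1, 0, f3])"
    by (rule derives_move_x_blocks[OF assms(3), of _ "[t1]" x "[t2, t3]" "[]"]) (simp_all add: ar)
  finally show ?thesis .
qed

lemma derives_rigid_blocks_03_12:
  assumes "B_equiv \<Sigma> n e0 0" "B_equiv \<Sigma> n 0 (n - 1)" "B_equiv \<Sigma> n (n - 1) f1"
    "e0 + e3 = n - 1" "f1 + f2 = n - 1"
  shows "derives \<Sigma> (rigid x [t1, t2, t3] [e0, 0, 0, e3]) (rigid x [t1, t2, t3] [0, f1, f2, 0])"
proof -
  have ar: "n - Suc e0 = e3" "n - Suc f1 = f2" using assms(4,5) by arith+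
  have "derives \<Sigma> (rigid x [t1, t2, t3] [e0, 0, 0, e3]) (rigid x [t1, t2, t3] [0, 0, 0, n - 1])"
    by (rule derives_move_x_blocks[OF assms(1), of _ "[]" x "[t1, t2, t3]" "[]"]) (simp_all add: ar)
  also have "derives \<Sigma> \<dots> (rigid x [t1, t2, t3] [0, n - 1, 0, 0])"
    by (rule derives_move_x_blocks[OF assms(2), of _ "[t1]" x "[t2, t3]" "[]"]) (simp_all add: ar)
  also have "derives \<Sigma> \<dots> (rigid x [t1, t2, t3] [0, f1, f2, 0])"
    by (rule derives_move_x_blocks[OF assms(3), of _ "[t1]" x "[t2]" "[t3]"]) (simp_all add: ar)
  finally show ?thesis .
qed

lemma derives_rigid_two_letters:
  assumes E0: "B_equiv \<Sigma> n e0 f0" and E1: "B_equiv \<Sigma> n (e0 + e1) (f0 + f1)"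
    and sums: "e0 + e1 + e2 = n - 1" "f0 + f1 + f2 = n - 1"
    and zeros: "nonzero_count [e0, e1, e2] \<le> 2" "nonzero_count [f0, f1, f2] \<le> 2"
    and cover: "e0 \<noteq> 0 \<or> f0 \<noteq> 0" "e1 \<noteq> 0 \<or> f1 \<noteq> 0" "e2 \<noteq> 0 \<or> f2 \<noteq> 0"
  shows "derives \<Sigma> (rigid x [t1, t2] [e0, e1, e2]) (rigid x [t1, t2] [f0, f1, f2])"
proof -
  have forward: "derives \<Sigma> (rigid x [t1, t2] [a0, a1, a2]) (rigid x [t1, t2] [b0, b1, b2])"
    if A0: "B_equiv \<Sigma> n a0 b0" and A1: "B_equiv \<Sigma> n (a0 + a1) (b0 + b1)"
      and "a0 + a1 + a2 = n - 1" "b0 + b1 + b2 = n - 1"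
      and "a2 = 0 \<and> b0 = 0 \<or> a2 = 0 \<and> b1 = 0 \<or> a1 = 0 \<and> b0 = 0"
    for a0 a1 a2 b0 b1 b2
    using that(5)
  proof (elim disjE conjE)
    assume "a2 = 0" "b0 = 0"
    then show ?thesis
      using derives_rigid_blocks_01_12[of \<Sigma> n a0 b1 a1 b2 x t1 t2] that by simp
  next
    assume "a2 = 0" "b1 = 0"
    then have "B_equiv \<Sigma> n (n - 1) b0" using A1 that(3) by simp
    then have "B_equiv \<Sigma> n a0 (n - 1)" using A0 by (metis derives.sym derives.trans)
    then show ?thesis
      using derives_rigid_blocks_01_02[of \<Sigma> n a0 b0 a1 b2 x t1 t2] \<open>B_equiv \<Sigma> n (n - 1) b0\<close>
        that \<open>a2 = 0\<close> \<open>b1 = 0\<close> by simp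
  next
    assume "a1 = 0" "b0 = 0"
    then have "B_equiv \<Sigma> n 0 b1" using A0 A1 by (simp, metis derives.sym derives.trans)
    then show ?thesis
      using derives_rigid_blocks_02_12[of \<Sigma> n a0 b1 a2 b2 x t1 t2] A0 that \<open>a1 = 0\<close> \<open>b0 = 0\<close> by simp
  qed
  consider "e2 = 0 \<and> f0 = 0 \<or> e2 = 0 \<and> f1 = 0 \<or> e1 = 0 \<and> f0 = 0"
    | "f2 = 0 \<and> e0 = 0 \<or> f2 = 0 \<and> e1 = 0 \<or> f1 = 0 \<and> e0 = 0"
    using zeros cover by (auto simp: nonzero_count_def split: if_splits)
  then show ?thesis
  proof cases
    case 1
    then show ?thesis using forward E0 E1 sums by blast
  next
    case 2
    show ?thesis
      using forward[OF derives.sym[OF E0] derives.sym[OF E1] sums(2,1) 2] by (rule derives.sym)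
  qed
qed

lemma derives_rigid_three_letters:
  assumes E0: "B_equiv \<Sigma> n e0 f0" and E1: "B_equiv \<Sigma> n (e0 + e1) (f0 + f1)"
    and E2: "B_equiv \<Sigma> n (e0 + e1 + e2) (f0 + f1 + f2)"
    and sums: "e0 + e1 + e2 + e3 = n - 1" "f0 + f1 + f2 + f3 = n - 1"
    and zeros: "nonzero_count [e0, e1, e2, e3] \<le> 2" "nonzero_count [f0, f1, f2, f3] \<le> 2"
    and cover: "e0 \<noteq> 0 \<or> f0 \<noteq> 0" "e1 \<noteq> 0 \<or> f1 \<noteq> 0" "e2 \<noteq> 0 \<or> f2 \<noteq> 0" "e3 \<noteq> 0 \<or> f3 \<noteq> 0"
  shows "derives \<Sigma> (rigid x [t1, t2, t3] [e0, e1, e2, e3]) (rigid x [t1, t2, t3] [f0, f1, f2, f3])"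
proof -
  have forward:
    "derives \<Sigma> (rigid x [t1, t2, t3] [a0, a1, a2, a3]) (rigid x [t1, t2, t3] [b0, b1, b2, b3])"
    if A0: "B_equiv \<Sigma> n a0 b0" and A1: "B_equiv \<Sigma> n (a0 + a1) (b0 + b1)"
      and A2: "B_equiv \<Sigma> n (a0 + a1 + a2) (b0 + b1 + b2)"
      and "a0 + a1 + a2 + a3 = n - 1" "b0 + b1 + b2 + b3 = n - 1"
      and "a2 = 0 \<and> a3 = 0 \<and> b1 = 0 \<or> a1 = 0 \<and> a3 = 0 \<and> b2 = 0 \<or> a1 = 0 \<and> a2 = 0 \<and> b3 = 0"
      and "b0 = 0"
    for a0 a1 a2 a3 b0 b1 b2 b3
    using that(6)
  proof (elim disjE conjE)
    assume "a2 = 0" "a3 = 0" "b1 = 0"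
    then have "B_equiv \<Sigma> n a0 0" "B_equiv \<Sigma> n (n - 1) 0" "B_equiv \<Sigma> n (n - 1) b2"
      using A0 A1 A2 that(4,7) by simp_all
    then show ?thesis
      using derives_rigid_blocks_01_23[of \<Sigma> n a0 b2 a1 b3 x t1 t2 t3] that
        \<open>a2 = 0\<close> \<open>a3 = 0\<close> \<open>b1 = 0\<close>
      by (simp, metis derives.sym derives.trans)
  next
    assume "a1 = 0" "a3 = 0" "b2 = 0"
    then have "B_equiv \<Sigma> n a0 0" "B_equiv \<Sigma> n a0 b1" "B_equiv \<Sigma> n (n - 1) b1"
      using A0 A1 A2 that(4,7) by simp_all
    then show ?thesis
      using derives_rigid_blocks_02_13[of \<Sigma> n a0 b1 a2 b3 x t1 t2 t3] that
        \<open>a1 = 0\<close> \<open>a3 = 0\<close> \<open>b2 = 0\<close>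
      by (simp, metis derives.sym derives.trans)
  next
    assume "a1 = 0" "a2 = 0" "b3 = 0"
    then have "B_equiv \<Sigma> n a0 0" "B_equiv \<Sigma> n a0 b1" "B_equiv \<Sigma> n a0 (n - 1)"
      using A0 A1 A2 that(5,7) by simp_all
    then show ?thesis
      using derives_rigid_blocks_03_12[of \<Sigma> n a0 b1 a3 b2 x t1 t2 t3] that
        \<open>a1 = 0\<close> \<open>a2 = 0\<close> \<open>b3 = 0\<close>
      by (simp, metis derives.sym derives.trans)
  qed
  consider
      "(e2 = 0 \<and> e3 = 0 \<and> f1 = 0 \<or> e1 = 0 \<and> e3 = 0 \<and> f2 = 0 \<or> e1 = 0 \<and> e2 = 0 \<and> f3 = 0) \<and> f0 = 0"
    | "(f2 = 0 \<and> f3 = 0 \<and> e1 = 0 \<or> f1 = 0 \<and> f3 = 0 \<and> e2 = 0 \<or> f1 = 0 \<and> f2 = 0 \<and> e3 = 0) \<and> e0 = 0"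
    using zeros cover by (auto simp: nonzero_count_def split: if_splits)
  then show ?thesis
  proof cases
    case 1
    then show ?thesis using forward E0 E1 E2 sums by blast
  next
    case 2
    then show ?thesis
      using forward[OF derives.sym[OF E0] derives.sym[OF E1] derives.sym[OF E2] sums(2,1)]
      by (blast intro: derives.sym)
  qed
qed

lemma length_le_nonzero_count_add:
  assumes "length es = length fs" and "\<forall>i<length es. es ! i \<noteq> 0 \<or> fs ! i \<noteq> 0"
  shows "length es \<le> nonzero_count es + nonzero_count fs"
proof -
  have "{..<length es} \<subseteq> {i. i < length es \<and> es ! i \<noteq> 0} \<union> {i. i < length fs \<and> fs ! i \<noteq> 0}"
    using assms by auto
  then have "card {..<length es} \<le>
      card ({i. i < length es \<and> es ! i \<noteq> 0} \<union> {i. i < length fs \<and> fs ! i \<noteq> 0})"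
    by (intro card_mono) auto
  also have "\<dots> \<le> card {i. i < length es \<and> es ! i \<noteq> 0} + card {i. i < length fs \<and> fs ! i \<noteq> 0}"
    by (rule card_Un_le)
  finally show ?thesis
    unfolding nonzero_count_def length_filter_conv_card by simp
qed

lemma derives_rigid_of_B_equivs:
  assumes lengths: "length es = length ts + 1" "length fs = length ts + 1"
    and nonzero: "nonzero_count es \<le> 2" "nonzero_count fs \<le> 2"
    and cover: "\<forall>i<length es. es ! i \<noteq> 0 \<or> fs ! i \<noteq> 0"
    and sums: "sum_list es = n - 1" "sum_list fs = n - 1"
    and E: "\<And>m. m < length ts \<Longrightarrow> B_equiv \<Sigma> n (prefix_sum es m) (prefix_sum fs m)"
  shows "derives \<Sigma> (rigid x ts es) (rigid x ts fs)"
proof -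
  have "length ts \<le> 3"
    using length_le_nonzero_count_add[OF _ cover] lengths nonzero by simp
  then consider "ts = []" | t1 where "ts = [t1]" | t1 t2 where "ts = [t1, t2]"
    | t1 t2 t3 where "ts = [t1, t2, t3]"
    by (cases ts; cases "tl ts"; cases "tl (tl ts)"; cases "tl (tl (tl ts))") auto
  then show ?thesis
  proof cases
    case 1
    then show ?thesis using lengths sums by (auto simp: length_Suc_conv intro: derives.refl)
  next
    case (2 t1)
    then obtain e0 e1 f0 f1 where "es = [e0, e1]" "fs = [f0, f1]"
      using lengths by (auto simp: length_Suc_conv)
    then show ?thesis
      using derives_rigid_blocks_01_01[of \<Sigma> n e0 f0 e1 f1 x t1] E[of 0] sums 2
      by (simp add: prefix_sum_def)
  next
    case (3 t1 t2)
    then obtain e0 e1 e2 f0 f1 f2 where es: "es = [e0, e1, e2]" and fs: "fs = [f0, f1, f2]"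
      using lengths by (auto simp: length_Suc_conv)
    show ?thesis
      unfolding 3 es fs
    proof (rule derives_rigid_two_letters)
      show "B_equiv \<Sigma> n e0 f0" "B_equiv \<Sigma> n (e0 + e1) (f0 + f1)"
        using E[of 0] E[of 1] by (simp_all add: 3 es fs prefix_sum_def)
      show "e0 \<noteq> 0 \<or> f0 \<noteq> 0" "e1 \<noteq> 0 \<or> f1 \<noteq> 0" "e2 \<noteq> 0 \<or> f2 \<noteq> 0"
        using cover[rule_format, of 0] cover[rule_format, of 1] cover[rule_format, of 2]
        by (simp_all add: es fs)
    qed (use nonzero sums in \<open>simp_all add: es fs\<close>)
  next
    case (4 t1 t2 t3)
    then obtain e0 e1 e2 e3 f0 f1 f2 f3
      where es: "es = [e0, e1, e2, e3]" and fs: "fs = [f0, f1, f2, f3]"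
      using lengths by (auto simp: length_Suc_conv)
    show ?thesis
      unfolding 4 es fs
    proof (rule derives_rigid_three_letters)
      show "B_equiv \<Sigma> n e0 f0" "B_equiv \<Sigma> n (e0 + e1) (f0 + f1)"
        "B_equiv \<Sigma> n (e0 + e1 + e2) (f0 + f1 + f2)"
        using E[of 0] E[of 1] E[of 2]
        by (simp_all add: 4 es fs prefix_sum_def numeral_eq_Suc add.assoc)
      show "e0 \<noteq> 0 \<or> f0 \<noteq> 0" "e1 \<noteq> 0 \<or> f1 \<noteq> 0" "e2 \<noteq> 0 \<or> f2 \<noteq> 0" "e3 \<noteq> 0 \<or> f3 \<noteq> 0"
        using cover[rule_format, of 0] cover[rule_format, of 1] cover[rule_format, of 2]
          cover[rule_format, of 3] by (simp_all add: es fs)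
    qed (use nonzero sums in \<open>simp_all add: es fs\<close>)
  qed
qed

section \<open>Rigid consequences of \<open>A\<^sub>n \<union> B\<^sub>n\<close>\<close>

lemma derives_B_projection:
  assumes "derives \<Sigma> (rigid x ts es) (rigid x ts fs)" "distinct (x # ts)" "m < length ts"
    and "length es = length ts + 1" "length fs = length ts + 1"
    and "sum_list es = n - 1" "sum_list fs = n - 1"
  shows "B_equiv \<Sigma> n (prefix_sum es m) (prefix_sum fs m)"
  using derives.subst[OF assms(1), of "\<lambda>y. if y = x then [0] else if y = ts ! m then [1] else []"]
    subst_rigid_single_letter[OF assms(2-4)] subst_rigid_single_letter[OF assms(2,3,5)] assms(6,7)
  by (simp add: B_word_def)

lemma derives_A_rigid:
  assumes "A_identity n \<in> \<Sigma>" "1 \<le> n" "x \<notin> set ts"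
    and "length es = length ts + 1" "length fs = length ts + 1"
    and "sum_list fs = sum_list es" "n \<le> sum_list es"
  shows "derives \<Sigma> (rigid x ts es) (rigid x ts fs)"
  using assms by (intro derives_A_of_same_x_projection[where x = x])
    (simp_all add: count_list_rigid_x filter_rigid)

lemma B_consequence_rigid_exponents:
  assumes n: "n \<ge> 3" and "distinct (x # ts)"
    and lengths: "length es = length ts + 1" "length fs = length ts + 1"
    and derivable: "derives (An_ids n \<union> B_ids n) (rigid x ts es) (rigid x ts fs)"
    and not_A: "\<not> derives (An_ids n) (rigid x ts es) (rigid x ts fs)"
  shows "sum_list es = n - 1 \<and> sum_list fs = n - 1 \<and> nonzero_count es \<le> 2 \<and> nonzero_count fs \<le> 2"
proof -
  let ?u = "rigid x ts es" and ?v = "rigid x ts fs"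
  have x: "x \<notin> set ts" using assms(2) by simp
  have inv: "B_invariant x n ?u ?v"
    using derives_B_invariant[OF derivable] An_B_ids_B_invariant[OF n] by blast
  then have "count_list ?u x = count_list ?v x"
    unfolding B_invariant_def by (metis subst_singleton)
  then have sums: "sum_list fs = sum_list es"
    using count_list_rigid_x[OF x] lengths by simp
  have "sum_list es < n"
    using derives_A_rigid[of n "An_ids n" x ts es fs] not_A x lengths sums n
    by (fastforce simp: An_ids_def)
  then have "restricted x n ?u"
    using count_list_rigid_x[OF x lengths(1)] count_list_rigid_neq count_list_distinct assms(2)
    by (auto simp: restricted_def)
  then have "B_normal x n ?u = B_normal x n ?v"
    using inv unfolding B_invariant_def by (metis subst_singleton)
  moreover have "?u \<noteq> ?v" using not_A derives.refl by metis
  ultimately have "count_list ?u x = n - 1" "two_blocks x ?u" "two_blocks x ?v"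
    by (auto simp: B_normal_def split: if_splits)
  then show ?thesis
    using nonzero_count_x_exponents_two_blocks x_exponents_rigid[OF x] lengths
      count_list_rigid_x[OF x lengths(1)] sums
    by metis
qed

theorem mainTheorem4:
  fixes n :: nat and u v :: word
  assumes "n \<ge> 3"
    and "efficient_rigid u v"
    and "\<not> derives (An_ids n) u v"
    and "derives (An_ids n \<union> B_ids n) u v"
  shows "\<exists>S \<subseteq> B_ids n.
           (\<forall>(s, t) \<in> S. derives (An_ids n \<union> {(u, v)}) s t) \<and>
           derives (An_ids n \<union> S) u v"
proof -
  obtain x ts es fs where distinct: "distinct (x # ts)"
    and lengths: "length es = length ts + 1" "length fs = length ts + 1"
    and cover: "\<forall>i<length es. es ! i \<noteq> 0 \<or> fs ! i \<noteq> 0"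
    and uv: "u = rigid x ts es" "v = rigid x ts fs"
    using assms(2) rigid_word_eq_rigid unfolding efficient_rigid_def by metis
  have sums: "sum_list es = n - 1" "sum_list fs = n - 1"
    and nonzero: "nonzero_count es \<le> 2" "nonzero_count fs \<le> 2"
    using B_consequence_rigid_exponents[OF assms(1) distinct lengths] assms(3,4) uv by auto
  define S
    where "S = (\<lambda>m. (B_word n (prefix_sum es m), B_word n (prefix_sum fs m))) ` {..<length ts}"
  have "S \<subseteq> B_ids n"
    using prefix_sum_le[of es] prefix_sum_le[of fs] sums by (auto simp: S_def B_ids_def B_words_eq)
  moreover have "derives (An_ids n \<union> {(u, v)}) s t" if "(s, t) \<in> S" for s t
    using that derives_B_projection[OF derives.ax distinct _ lengths sums] uv by (auto simp: S_def)
  moreover have "derives (An_ids n \<union> S) u v"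
    unfolding uv using lengths nonzero cover sums
    by (rule derives_rigid_of_B_equivs) (auto simp: S_def intro: derives.ax)
  ultimately show ?thesis by blast
qed

end
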